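(* Let $G_3$ be the graph with vertices $v_1,\dots,v_8$ and edges $a_1=v_1v_2$, $a_2=v_2v_3$, $a_3=v_3v_4$, $a_4=v_4v_5$, $a_5=v_1v_5$, $a_6=v_1v_8$, $a_7=v_2v_6$, $a_8=v_3v_6$, $a_9=v_4v_7$, $a_{10}=v_5v_8$, $a_{11}=v_6v_7$, $a_{12}=v_7v_8$. Let $\gamma_1=e_1+e_3+e_{10}+e_{11}$, $\gamma_2=e_2+e_4+e_6+e_{11}$, $\gamma_3=e_3+e_5+e_7+e_{12}$, $\gamma_4=e_2+e_5+e_6+e_7+e_8+2e_9+e_{10}$, $\gamma_5=e_2+e_3+e_5+e_6+e_7+e_9+e_{10}+e_{11}$, and for $(k_1,\dots,k_5)\in\mathbb{R}^5$ put $\gamma(k)=\sum_{i=1}^5k_i\gamma_i$. Consider the following properties of $(k_1,\dots,k_5)$, each of which includes $k_1,k_2,k_3,k_4\in\mathbb{N}$: $P_a$: $k_5\in\mathbb{N}$; $P_b$: $-k_5\in\mathbb{P}$ and $\min\{k_1,k_4\}\ge -k_5$; $P_{c_1}$: $-k_5\in\mathbb{P}$, $\min\{k_1,k_4\}<-k_5$, $k_1\ge k_4$; $P_{c_2}$: $-k_5\in\mathbb{P}$, $\min\{k_1,k_4\}<-k_5$, $k_1<k_4$, $2k_1+k_5\ge0$; $P_{c_3}$: $-k_5\in\mathbb{P}$, $\min\{k_1,k_4\}<-k_5$, $k_1<k_4$, $2k_1+k_5<0$. For each $h\in\{a,b,c_1,c_2,c_3\}$ define $(l_1,\dots,l_5)$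 from $(k_1,\dots,k_5)$ by: $h=a$: $(k_1,\ k_2,\ k_3,\ k_4,\ k_5)$; $h=b$: $(k_1+k_5,\ k_2,\ k_3,\ k_4+k_5,\ -k_5-1)$; $h=c_1$: $(k_1-k_4,\ k_2+k_4+k_5,\ k_3+k_4+k_5,\ -k_5-k_4-1,\ 2k_4+k_5)$; $h=c_2$: $(k_2+k_1+k_5,\ k_3+k_1+k_5,\ k_4-k_1-1,\ -k_5-k_1-1,\ 2k_1+k_5)$; $h=c_3$: $(k_2+k_1+k_5,\ k_3+k_1+k_5,\ k_4+k_1+k_5,\ k_1,\ -k_5-2k_1-1)$. Then for each $h$, the set $P_h(S(G_3))$ of $(k_1,\dots,k_5)\in\mathbb{R}^5$ with $\gamma(k)\in S(G_3)$ satisfying $P_h$ equals $\{(l_1,\dots,l_5)\in\mathbb{N}^5\}$ with the $l_i$ given above; that is, $(k_1,\dots,k_5)\in\mathbb{R}^5$ satisfies $\gamma(k)\in S(G_3)$ and $P_h$ if and only if the corresponding $l_1,\dots,l_5$ all lie in $\mathbb{N}$.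
   Context: For a finite graph $G$ with edges $a_1,\dots,a_n$, $S_{\mathbb{R}}(G)$ is the set of vectors $(\alpha_1,\dots,\alpha_n)\in\mathbb{R}^n$ (real labels on edges) such that for every vertex the sum of the labels of incident edges is the same number $s$; magic labellings form $S(G)=S_{\mathbb{R}}(G)\cap\mathbb{N}^n$. For $G_3$, every element of $S_{\mathbb{R}}(G_3)$ is uniquely of the form $\gamma(k)$. $e_i$ is the $i$-th unit vector of $\mathbb{R}^{12}$, $\mathbb{N}=\{0,1,2,\dots\}$, $\mathbb{P}=\{1,2,\dots\}$. *)

theory Defs
  imports Main Complex_Main
begin

text \<open>Vectors of \<real>^n are represented as real lists of length n; the i-th coordinate
(1-based, as in the paper) is the list entry at position i-1.
A finite graph is given by a vertex set and a list of edges (pairs of vertices);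
edge a_i is the (i-1)-th list entry.\<close>

definition magic_R :: "'v set \<Rightarrow> ('v \<times> 'v) list \<Rightarrow> real list set" where
  "magic_R V E = {\<alpha>. length \<alpha> = length E \<and>
     (\<exists>s. \<forall>v\<in>V. (\<Sum>i<length E. if v = fst (E!i) \<or> v = snd (E!i) then \<alpha>!i else 0) = s)}"

definition magic :: "'v set \<Rightarrow> ('v \<times> 'v) list \<Rightarrow> real list set" where
  "magic V E = {\<alpha> \<in> magic_R V E. \<forall>i<length \<alpha>. \<alpha>!i \<in> \<nat>}"

definition G3_vertices :: "nat set" where
  "G3_vertices = {1..8}"

definition G3_edges :: "(nat \<times> nat) list" where
  "G3_edges = [(1,2),(2,3),(3,4),(4,5),(1,5),(1,8),(2,6),(3,6),(4,7),(5,8),(6,7),(7,8)]"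

definition uvec :: "nat \<Rightarrow> real list" where
  "uvec i = map (\<lambda>j. if j = i then 1 else 0) [1..<13]"

definition vadd :: "real list \<Rightarrow> real list \<Rightarrow> real list" where
  "vadd x y = map2 (+) x y"

definition vscale :: "real \<Rightarrow> real list \<Rightarrow> real list" where
  "vscale c x = map ((*) c) x"

definition gamma1 :: "real list" where
  "gamma1 = vadd (uvec 1) (vadd (uvec 3) (vadd (uvec 10) (uvec 11)))"
definition gamma2 :: "real list" where
  "gamma2 = vadd (uvec 2) (vadd (uvec 4) (vadd (uvec 6) (uvec 11)))"
definition gamma3 :: "real list" where
  "gamma3 = vadd (uvec 3) (vadd (uvec 5) (vadd (uvec 7) (uvec 12)))"
definition gamma4 :: "real list" where
  "gamma4 = vadd (uvec 2) (vadd (uvec 5) (vadd (uvec 6) (vadd (uvec 7) (vadd (uvec 8)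
              (vadd (vscale 2 (uvec 9)) (uvec 10))))))"
definition gamma5 :: "real list" where
  "gamma5 = vadd (uvec 2) (vadd (uvec 3) (vadd (uvec 5) (vadd (uvec 6) (vadd (uvec 7)
              (vadd (uvec 9) (vadd (uvec 10) (uvec 11)))))))"

definition gamma :: "real \<Rightarrow> real \<Rightarrow> real \<Rightarrow> real \<Rightarrow> real \<Rightarrow> real list" where
  "gamma k1 k2 k3 k4 k5 = vadd (vscale k1 gamma1) (vadd (vscale k2 gamma2)
     (vadd (vscale k3 gamma3) (vadd (vscale k4 gamma4) (vscale k5 gamma5))))"

definition Pos :: "real set" where
  "Pos = {x. x \<in> \<nat> \<and> x \<ge> 1}"

definition P_base :: "real \<Rightarrow> real \<Rightarrow> real \<Rightarrow> real \<Rightarrow> bool" where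
  "P_base k1 k2 k3 k4 \<longleftrightarrow> k1 \<in> \<nat> \<and> k2 \<in> \<nat> \<and> k3 \<in> \<nat> \<and> k4 \<in> \<nat>"

definition P_a :: "real \<Rightarrow> real \<Rightarrow> real \<Rightarrow> real \<Rightarrow> real \<Rightarrow> bool" where
  "P_a k1 k2 k3 k4 k5 \<longleftrightarrow> P_base k1 k2 k3 k4 \<and> k5 \<in> \<nat>"
definition P_b :: "real \<Rightarrow> real \<Rightarrow> real \<Rightarrow> real \<Rightarrow> real \<Rightarrow> bool" where
  "P_b k1 k2 k3 k4 k5 \<longleftrightarrow> P_base k1 k2 k3 k4 \<and> -k5 \<in> Pos \<and> min k1 k4 \<ge> -k5"
definition P_c1 :: "real \<Rightarrow> real \<Rightarrow> real \<Rightarrow> real \<Rightarrow> real \<Rightarrow> bool" where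
  "P_c1 k1 k2 k3 k4 k5 \<longleftrightarrow> P_base k1 k2 k3 k4 \<and> -k5 \<in> Pos \<and> min k1 k4 < -k5 \<and> k1 \<ge> k4"
definition P_c2 :: "real \<Rightarrow> real \<Rightarrow> real \<Rightarrow> real \<Rightarrow> real \<Rightarrow> bool" where
  "P_c2 k1 k2 k3 k4 k5 \<longleftrightarrow> P_base k1 k2 k3 k4 \<and> -k5 \<in> Pos \<and> min k1 k4 < -k5 \<and> k1 < k4
      \<and> 2*k1 + k5 \<ge> 0"
definition P_c3 :: "real \<Rightarrow> real \<Rightarrow> real \<Rightarrow> real \<Rightarrow> real \<Rightarrow> bool" where
  "P_c3 k1 k2 k3 k4 k5 \<longleftrightarrow> P_base k1 k2 k3 k4 \<and> -k5 \<in> Pos \<and> min k1 k4 < -k5 \<and> k1 < k4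
      \<and> 2*k1 + k5 < 0"

definition all_nat :: "real list \<Rightarrow> bool" where
  "all_nat l \<longleftrightarrow> (\<forall>x\<in>set l. x \<in> \<nat>)"

end

theory Submission
  imports Defs
begin

text \<open>Every vertex of \<open>G\<^sub>3\<close> sees the same sum \<open>k\<^sub>1+k\<^sub>2+k\<^sub>3+2k\<^sub>4+2k\<^sub>5\<close> under \<open>\<gamma>(k)\<close>, so
\<open>\<gamma>(k)\<close> is always a real magic labelling and lies in \<open>S(G\<^sub>3)\<close> exactly when its twelve
coordinates are natural; as \<open>k\<^sub>4\<close> and \<open>2k\<^sub>4+k\<^sub>5\<close> are among them, this forces \<open>k \<in> \<int>\<^sup>5\<close>.
Each map \<open>k \<mapsto> l\<close> is an affine bijection of \<open>\<int>\<^sup>5\<close>, so \<open>l \<in> \<nat>\<^sup>5\<close> forces \<open>k \<in> \<int>\<^sup>5\<close> too.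
Hence both sides of every equivalence fail off \<open>\<int>\<^sup>5\<close>, and on \<open>\<int>\<^sup>5\<close> each equivalence is
linear arithmetic once every strict inequality \<open>a < b\<close> is read as \<open>a \<le> b - 1\<close>.\<close>

lemma real_Nats_iff_Ints_nonneg: "(x::real) \<in> \<nat> \<longleftrightarrow> x \<in> \<int> \<and> 0 \<le> x"
  by (simp add: Nats_altdef2)

lemma Ints_less_iff_le_diff_one:
  fixes a b :: real
  assumes "a \<in> \<int>" "b \<in> \<int>"
  shows "a < b \<longleftrightarrow> a \<le> b - 1"
  using assms by (auto elim!: Ints_cases)

lemma gamma_coordinates:
  "gamma k1 k2 k3 k4 k5 =
     [k1, k2+k4+k5, k1+k3+k5, k2, k3+k4+k5, k2+k4+k5, k3+k4+k5, k4, 2*k4+k5, k1+k4+k5, k1+k2+k5, k3]"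
  by (simp add: gamma_def gamma1_def gamma2_def gamma3_def gamma4_def gamma5_def uvec_def vadd_def
      vscale_def upt_rec algebra_simps)

lemma gamma_vertex_sum:
  assumes "v \<in> G3_vertices"
  shows "(\<Sum>i<length G3_edges. if v = fst (G3_edges!i) \<or> v = snd (G3_edges!i)
            then gamma k1 k2 k3 k4 k5 ! i else 0) = k1 + k2 + k3 + 2*k4 + 2*k5"
proof -
  have "v \<in> {1,2,3,4,5,6,7,8}" using assms by (auto simp: G3_vertices_def)
  then show ?thesis
    by (auto simp: gamma_coordinates G3_edges_def numeral_eq_Suc lessThan_Suc)
qed

lemma gamma_in_magic_R: "gamma k1 k2 k3 k4 k5 \<in> magic_R G3_vertices G3_edges"
proof -
  have "length (gamma k1 k2 k3 k4 k5) = length G3_edges"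
    by (simp add: gamma_coordinates G3_edges_def)
  with gamma_vertex_sum show ?thesis
    unfolding magic_R_def by blast
qed

lemma gamma_in_magic_iff:
  "gamma k1 k2 k3 k4 k5 \<in> magic G3_vertices G3_edges \<longleftrightarrow>
     all_nat [k1, k2+k4+k5, k1+k3+k5, k2, k3+k4+k5, k2+k4+k5, k3+k4+k5, k4, 2*k4+k5, k1+k4+k5, k1+k2+k5, k3]"
  using gamma_in_magic_R[of k1 k2 k3 k4 k5]
  unfolding magic_def all_nat_def all_set_conv_all_nth by (simp add: gamma_coordinates)

lemma gamma_in_magic_imp_Ints:
  assumes "gamma k1 k2 k3 k4 k5 \<in> magic G3_vertices G3_edges"
  shows "k1 \<in> \<int> \<and> k2 \<in> \<int> \<and> k3 \<in> \<int> \<and> k4 \<in> \<int> \<and> k5 \<in> \<int>"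
  using assms by (auto simp: gamma_in_magic_iff all_nat_def real_Nats_iff_Ints_nonneg)

lemma magic_and_P_iff_on_Ints:
  assumes "k1 \<in> \<int>" "k2 \<in> \<int>" "k3 \<in> \<int>" "k4 \<in> \<int>" "k5 \<in> \<int>"
  shows
   "(gamma k1 k2 k3 k4 k5 \<in> magic G3_vertices G3_edges \<and> P_a k1 k2 k3 k4 k5
       \<longleftrightarrow> all_nat [k1, k2, k3, k4, k5])
  \<and> (gamma k1 k2 k3 k4 k5 \<in> magic G3_vertices G3_edges \<and> P_b k1 k2 k3 k4 k5
       \<longleftrightarrow> all_nat [k1 + k5, k2, k3, k4 + k5, -k5 - 1])
  \<and> (gamma k1 k2 k3 k4 k5 \<in> magic G3_vertices G3_edges \<and> P_c1 k1 k2 k3 k4 k5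
       \<longleftrightarrow> all_nat [k1 - k4, k2 + k4 + k5, k3 + k4 + k5, -k5 - k4 - 1, 2*k4 + k5])
  \<and> (gamma k1 k2 k3 k4 k5 \<in> magic G3_vertices G3_edges \<and> P_c2 k1 k2 k3 k4 k5
       \<longleftrightarrow> all_nat [k2 + k1 + k5, k3 + k1 + k5, k4 - k1 - 1, -k5 - k1 - 1, 2*k1 + k5])
  \<and> (gamma k1 k2 k3 k4 k5 \<in> magic G3_vertices G3_edges \<and> P_c3 k1 k2 k3 k4 k5
       \<longleftrightarrow> all_nat [k2 + k1 + k5, k3 + k1 + k5, k4 + k1 + k5, k1, -k5 - 2*k1 - 1])"
  using assms
  by (auto simp: gamma_in_magic_iff all_nat_def real_Nats_iff_Ints_nonneg Ints_less_iff_le_diff_one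
      P_a_def P_b_def P_c1_def P_c2_def P_c3_def P_base_def Pos_def min_def)

lemma Ints_if_all_nat_transform:
  assumes "all_nat [k1, k2, k3, k4, k5]
    \<or> all_nat [k1 + k5, k2, k3, k4 + k5, -k5 - 1]
    \<or> all_nat [k1 - k4, k2 + k4 + k5, k3 + k4 + k5, -k5 - k4 - 1, 2*k4 + k5]
    \<or> all_nat [k2 + k1 + k5, k3 + k1 + k5, k4 - k1 - 1, -k5 - k1 - 1, 2*k1 + k5]
    \<or> all_nat [k2 + k1 + k5, k3 + k1 + k5, k4 + k1 + k5, k1, -k5 - 2*k1 - 1]"
  shows "k1 \<in> \<int> \<and> k2 \<in> \<int> \<and> k3 \<in> \<int> \<and> k4 \<in> \<int> \<and> k5 \<in> \<int>"
  using assms unfolding all_nat_def real_Nats_iff_Ints_nonneg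
proof (elim disjE)
  assume "\<forall>x\<in>set [k1, k2, k3, k4, k5]. x \<in> \<int> \<and> 0 \<le> x"
  then show ?thesis by simp
next
  assume "\<forall>x\<in>set [k1 + k5, k2, k3, k4 + k5, -k5 - 1]. x \<in> \<int> \<and> 0 \<le> x"
  then show ?thesis by auto
next
  assume "\<forall>x\<in>set [k1 - k4, k2 + k4 + k5, k3 + k4 + k5, -k5 - k4 - 1, 2*k4 + k5]. x \<in> \<int> \<and> 0 \<le> x"
  then have l: "k1 - k4 \<in> \<int>" "k2 + k4 + k5 \<in> \<int>" "k3 + k4 + k5 \<in> \<int>" "-k5 - k4 - 1 \<in> \<int>"
    "2*k4 + k5 \<in> \<int>" by simp_all
  from l(4,5) have "(-k5 - k4 - 1) + (2*k4 + k5) \<in> \<int>" by (rule Ints_add)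
  then have "k4 \<in> \<int>" by simp
  with l show ?thesis by simp
next
  assume "\<forall>x\<in>set [k2 + k1 + k5, k3 + k1 + k5, k4 - k1 - 1, -k5 - k1 - 1, 2*k1 + k5]. x \<in> \<int> \<and> 0 \<le> x"
  then have l: "k2 + k1 + k5 \<in> \<int>" "k3 + k1 + k5 \<in> \<int>" "k4 - k1 - 1 \<in> \<int>" "-k5 - k1 - 1 \<in> \<int>"
    "2*k1 + k5 \<in> \<int>" by simp_all
  from l(4,5) have "(-k5 - k1 - 1) + (2*k1 + k5) \<in> \<int>" by (rule Ints_add)
  then have "k1 \<in> \<int>" by simp
  with l show ?thesis by simp
next
  assume "\<forall>x\<in>set [k2 + k1 + k5, k3 + k1 + k5, k4 + k1 + k5, k1, -k5 - 2*k1 - 1]. x \<in> \<int> \<and> 0 \<le> x"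
  then show ?thesis by (auto simp: Ints_mult)
qed

theorem mainTheorem6:
  fixes k1 k2 k3 k4 k5 :: real
  shows
   "(gamma k1 k2 k3 k4 k5 \<in> magic G3_vertices G3_edges \<and> P_a k1 k2 k3 k4 k5
       \<longleftrightarrow> all_nat [k1, k2, k3, k4, k5])
  \<and> (gamma k1 k2 k3 k4 k5 \<in> magic G3_vertices G3_edges \<and> P_b k1 k2 k3 k4 k5
       \<longleftrightarrow> all_nat [k1 + k5, k2, k3, k4 + k5, -k5 - 1])
  \<and> (gamma k1 k2 k3 k4 k5 \<in> magic G3_vertices G3_edges \<and> P_c1 k1 k2 k3 k4 k5
       \<longleftrightarrow> all_nat [k1 - k4, k2 + k4 + k5, k3 + k4 + k5, -k5 - k4 - 1, 2*k4 + k5])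
  \<and> (gamma k1 k2 k3 k4 k5 \<in> magic G3_vertices G3_edges \<and> P_c2 k1 k2 k3 k4 k5
       \<longleftrightarrow> all_nat [k2 + k1 + k5, k3 + k1 + k5, k4 - k1 - 1, -k5 - k1 - 1, 2*k1 + k5])
  \<and> (gamma k1 k2 k3 k4 k5 \<in> magic G3_vertices G3_edges \<and> P_c3 k1 k2 k3 k4 k5
       \<longleftrightarrow> all_nat [k2 + k1 + k5, k3 + k1 + k5, k4 + k1 + k5, k1, -k5 - 2*k1 - 1])"
proof (cases "k1 \<in> \<int> \<and> k2 \<in> \<int> \<and> k3 \<in> \<int> \<and> k4 \<in> \<int> \<and> k5 \<in> \<int>")
  case True
  then show ?thesis by (simp add: magic_and_P_iff_on_Ints)
next
  case False
  then have "gamma k1 k2 k3 k4 k5 \<notin> magic G3_vertices G3_edges"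
    using gamma_in_magic_imp_Ints by blast
  moreover have "\<not> all_nat [k1, k2, k3, k4, k5]"
    and "\<not> all_nat [k1 + k5, k2, k3, k4 + k5, -k5 - 1]"
    and "\<not> all_nat [k1 - k4, k2 + k4 + k5, k3 + k4 + k5, -k5 - k4 - 1, 2*k4 + k5]"
    and "\<not> all_nat [k2 + k1 + k5, k3 + k1 + k5, k4 - k1 - 1, -k5 - k1 - 1, 2*k1 + k5]"
    and "\<not> all_nat [k2 + k1 + k5, k3 + k1 + k5, k4 + k1 + k5, k1, -k5 - 2*k1 - 1]"
    using False Ints_if_all_nat_transform by blast+
  ultimately show ?thesis by blast
qed

end
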